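(* In the u2D Toda setting described in the context, fix integers $l,m,n$. Then \[ \begin{aligned} &\tau(l+1,m,n)=\max_{0\le k_1\le N}\bigl(\tau_c(-1,N-k_1)-k_1\delta\bigr),\qquad \tau(l,m-1,n)=\max_{0\le k_2\le N}\bigl(\tau_c(k_2-1,N)-k_2\varepsilon\bigr),\\ &\tau(l+1,m,n-1)=\max_{0\le k_1\le N}\bigl(\tau_c(N-k_1-1,N)-k_1\delta\bigr),\qquad \tau(l,m-1,n+1)=\max_{0\le k_2\le N}\bigl(\tau_c(-1,k_2)-k_2\varepsilon\bigr),\\ &\tau(l,m,n)=\tau_c(-1,N),\qquad \tau(l+1,m-1,n)=\max_{0\le k_1,k_2\le N}\bigl(\Psi(k_1,k_2)-k_1\delta-k_2\varepsilon\bigr), \end{aligned} \] where for $0\le k_1,k_2\le N$ \[ \Psi(k_1,k_2)=\begin{cases} \max_{0\le i\le k_2}\tau_c(k_2-i-1,\,N-k_1+i) & (k_1\ge k_2\text{ and }N-k_1\ge k_2),\\ \max_{0\le i\le k_1}\tau_c(k_2-i-1,\,N-k_1+i) & (N-k_1\ge k_2\ge k_1),\\ \max_{0\le i\le N-k_1}\tau_c(i-1,\,N-k_1+k_2-i) & (k_1\ge k_2\ge N-k_1),\\ \max_{0\le i\le N-k_2}\tau_c(N-k_1-i-1,\,k_2+i) & (k_2\ge N-k_1\text{ and }k_2\ge k_1). \end{cases} \] Moreover, for $1\le k_1,k_2\le N$: $\Psi(k_1,k_2)=\max(\Psi(k_1-1,k_2-1),\tau_c(k_2-1,N-k_1))$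 if $k_2-1<N-k_1$; $\Psi(k_1-1,k_2-1)=\max(\Psi(k_1,k_2),\tau_c(N-k_1,k_2-1))$ if $k_2-1>N-k_1$; $\Psi(k_1,k_2)=\Psi(k_1-1,k_2-1)$ if $k_2-1=N-k_1$.
   Context: Ultradiscrete permanent (UP): for a real $N\times N$ matrix $A=(a_{ij})$, $\max A\equiv\max_{\pi}\sum_{i=1}^N a_{i\pi(i)}$ over all permutations $\pi$ of $\{1,\dots,N\}$; $\max[\bm{b}_1\ \dots\ \bm{b}_N]$ is the UP of the matrix with columns $\bm{b}_j$. u2D Toda setting: $N\ge1$; real $\delta,\varepsilon>0$; arbitrary real $r_i,c_i,c'_i$ ($1\le i\le N$); for integers $l,m,n$, $\eta_i(l,m,n)=\max(0,r_i-\delta)l-\max(0,-r_i-\varepsilon)m+r_in+c_i$, $\eta'_i(l,m,n)=\max(0,-r_i-\delta)l-\max(0,r_i-\varepsilon)m-r_in+c'_i$, $\phi_i(l,m,n)=\max(\eta_i(l,m,n),\eta'_i(l,m,n))$, and $\tau(l,m,n)=\max[\phi_i(l,m,n+j-1)]_{1\le i,j\le N}$. With $l,m,n$ fixed put $\bm{\phi}(j)=(\phi_i(l,m,n+j))_{1\le i\le N}$, and for $-1\le\alpha<\beta\le N$ let $\tau_c(\alpha,\beta)=\max[\bm{\phi}(-1)\ \dots\ \widehat{\bm{\phi}(\alpha)}\ \dots\ \widehat{\bm{\phi}(\beta)}\ \dots\ \bm{\phi}(N)]$, the UP of the $N$ columns $\bm{\phi}(j)$, $j\in\{-1,0,\dots,N\}\setminus\{\alpha,\beta\}$.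 *)

theory Defs
  imports Complex_Main "HOL-Combinatorics.Permutations"
begin

definition up :: "nat \<Rightarrow> (nat \<Rightarrow> nat \<Rightarrow> real) \<Rightarrow> real" where
  "up N a = Max ((\<lambda>\<pi>. \<Sum>i=1..N. a i (\<pi> i)) ` {\<pi>. \<pi> permutes {1..N}})"

definition eta :: "(nat \<Rightarrow> real) \<Rightarrow> (nat \<Rightarrow> real) \<Rightarrow> real \<Rightarrow> real \<Rightarrow> nat \<Rightarrow> int \<Rightarrow> int \<Rightarrow> int \<Rightarrow> real" where
  "eta r c \<delta> \<epsilon> i l m n =
     max 0 (r i - \<delta>) * of_int l - max 0 (- r i - \<epsilon>) * of_int m + r i * of_int n + c i"

definition eta' :: "(nat \<Rightarrow> real) \<Rightarrow> (nat \<Rightarrow> real) \<Rightarrow> real \<Rightarrow> real \<Rightarrow> nat \<Rightarrow> int \<Rightarrow> int \<Rightarrow> int \<Rightarrow> real" where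
  "eta' r c' \<delta> \<epsilon> i l m n =
     max 0 (- r i - \<delta>) * of_int l - max 0 (r i - \<epsilon>) * of_int m - r i * of_int n + c' i"

definition phi :: "(nat \<Rightarrow> real) \<Rightarrow> (nat \<Rightarrow> real) \<Rightarrow> (nat \<Rightarrow> real) \<Rightarrow> real \<Rightarrow> real \<Rightarrow> nat \<Rightarrow> int \<Rightarrow> int \<Rightarrow> int \<Rightarrow> real" where
  "phi r c c' \<delta> \<epsilon> i l m n = max (eta r c \<delta> \<epsilon> i l m n) (eta' r c' \<delta> \<epsilon> i l m n)"

definition tau :: "nat \<Rightarrow> (nat \<Rightarrow> real) \<Rightarrow> (nat \<Rightarrow> real) \<Rightarrow> (nat \<Rightarrow> real) \<Rightarrow> real \<Rightarrow> real \<Rightarrow> int \<Rightarrow> int \<Rightarrow> int \<Rightarrow> real" where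
  "tau N r c c' \<delta> \<epsilon> l m n = up N (\<lambda>i j. phi r c c' \<delta> \<epsilon> i l m (n + int j - 1))"

definition tauc :: "nat \<Rightarrow> (nat \<Rightarrow> real) \<Rightarrow> (nat \<Rightarrow> real) \<Rightarrow> (nat \<Rightarrow> real) \<Rightarrow> real \<Rightarrow> real \<Rightarrow> int \<Rightarrow> int \<Rightarrow> int \<Rightarrow> int \<Rightarrow> int \<Rightarrow> real" where
  "tauc N r c c' \<delta> \<epsilon> l m n \<alpha> \<beta> =
     up N (\<lambda>i k. phi r c c' \<delta> \<epsilon> i l m
             (n + sorted_list_of_set ({-1..int N} - {\<alpha>, \<beta>}) ! (k - 1)))"

text \<open>Psi(k1,k2), by the four (consistent on overlaps) cases of the paper.\<close>
definition Psi :: "nat \<Rightarrow> (nat \<Rightarrow> real) \<Rightarrow> (nat \<Rightarrow> real) \<Rightarrow> (nat \<Rightarrow> real) \<Rightarrow> real \<Rightarrow> real \<Rightarrow> int \<Rightarrow> int \<Rightarrow> int \<Rightarrow> nat \<Rightarrow> nat \<Rightarrow> real" where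
  "Psi N r c c' \<delta> \<epsilon> l m n k1 k2 =
    (let tc = tauc N r c c' \<delta> \<epsilon> l m n; K1 = int k1; K2 = int k2; NN = int N in
     if K1 \<ge> K2 \<and> NN - K1 \<ge> K2 then
       Max ((\<lambda>i. tc (K2 - int i - 1) (NN - K1 + int i)) ` {0..k2})
     else if NN - K1 \<ge> K2 \<and> K2 \<ge> K1 then
       Max ((\<lambda>i. tc (K2 - int i - 1) (NN - K1 + int i)) ` {0..k1})
     else if K1 \<ge> K2 \<and> K2 \<ge> NN - K1 then
       Max ((\<lambda>i. tc (int i - 1) (NN - K1 + K2 - int i)) ` {0..N - k1})
     else
       Max ((\<lambda>i. tc (NN - K1 - int i - 1) (K2 + int i)) ` {0..N - k2}))"

end

theory Submission
  imports Defs
begin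

text \<open>Each \<open>phi_i\<close> is the maximum of two functions affine in \<open>n\<close>, hence convex in \<open>n\<close>.
  Shifting \<open>l\<close> or \<open>m\<close> replaces every column \<open>phi(n + j - 1)\<close> of \<open>tau\<close> by a maximum of the
  neighbouring columns \<open>phi(n + j - 1 + t)\<close>, \<open>t \<in> {-1, 0, 1}\<close>, with penalties \<open>w t\<close>, and the
  permanent of such a matrix is the maximum, over shift vectors \<open>e\<close>, of the permanent of the shifted
  columns minus the penalties. By convexity a shift vector can be sorted without decreasing the
  permanent (two coinciding columns are pulled apart, two crossed ones swapped) nor, for midpoint
  convex \<open>w\<close>, increasing the penalty. A sorted shift moves the first \<open>a\<close> columns left and the last
  \<open>b\<close> right, and its permanent is \<open>tau_c(a - 1, N - b)\<close>. Each formula is this expansion for the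
  appropriate penalties; \<open>Psi\<close> collects the terms along an antidiagonal, whence its recursions.\<close>

lemma finite_permutes_interval: "finite {\<pi>. \<pi> permutes {1..(N::nat)}}"
  by (simp add: finite_permutations)

lemma up_ge_sum: "\<pi> permutes {1..N} \<Longrightarrow> (\<Sum>i=1..N. a i (\<pi> i)) \<le> up N a"
  unfolding up_def using finite_permutes_interval by (intro Max_ge) auto

lemma up_attained:
  obtains \<pi> where "\<pi> permutes {1..N}" "up N a = (\<Sum>i=1..N. a i (\<pi> i))"
proof -
  have "up N a \<in> (\<lambda>\<pi>. \<Sum>i=1..N. a i (\<pi> i)) ` {\<pi>. \<pi> permutes {1..N}}"
    unfolding up_def using finite_permutes_interval permutes_id
    by (intro Max_in finite_imageI) blast+
  then show ?thesis using that by auto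
qed

lemma up_le_permuted:
  assumes \<tau>: "\<tau> permutes {1..N}"
    and le: "\<And>i j. i \<in> {1..N} \<Longrightarrow> j \<in> {1..N} \<Longrightarrow> a i j \<le> b i (\<tau> j)"
  shows "up N a \<le> up N b"
proof -
  obtain \<pi> where \<pi>: "\<pi> permutes {1..N}" "up N a = (\<Sum>i=1..N. a i (\<pi> i))"
    by (rule up_attained)
  have \<pi>_in: "\<And>i. i \<in> {1..N} \<Longrightarrow> \<pi> i \<in> {1..N}"
    by (simp only: permutes_in_image[OF \<pi>(1)])
  have "(\<Sum>i=1..N. a i (\<pi> i)) \<le> (\<Sum>i=1..N. b i ((\<tau> \<circ> \<pi>) i))"
    unfolding comp_apply by (intro sum_mono le) (blast intro: \<pi>_in)+
  also have "\<dots> \<le> up N b"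
    by (intro up_ge_sum permutes_compose[OF \<pi>(1) \<tau>])
  finally show ?thesis using \<pi>(2) by simp
qed

lemma up_mono:
  "(\<And>i j. i \<in> {1..N} \<Longrightarrow> j \<in> {1..N} \<Longrightarrow> a i j \<le> b i j) \<Longrightarrow> up N a \<le> up N b"
  using up_le_permuted[OF permutes_id] by simp

lemma up_cong:
  "(\<And>i j. i \<in> {1..N} \<Longrightarrow> j \<in> {1..N} \<Longrightarrow> a i j = b i j) \<Longrightarrow> up N a = up N b"
  by (intro antisym up_mono) auto

text \<open>Averaging the permutations \<open>\<pi>\<close> and \<open>\<tau> \<circ> \<pi>\<close>.\<close>
lemma up_le_by_exchange:
  assumes \<tau>: "\<tau> permutes {1..N}"
    and le: "\<And>i j. i \<in> {1..N} \<Longrightarrow> j \<in> {1..N} \<Longrightarrow> 2 * a i j \<le> b i j + b i (\<tau> j)"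
  shows "up N a \<le> up N b"
proof -
  obtain \<pi> where \<pi>: "\<pi> permutes {1..N}" "up N a = (\<Sum>i=1..N. a i (\<pi> i))"
    by (rule up_attained)
  have \<pi>_in: "\<And>i. i \<in> {1..N} \<Longrightarrow> \<pi> i \<in> {1..N}"
    by (simp only: permutes_in_image[OF \<pi>(1)])
  have "2 * (\<Sum>i=1..N. a i (\<pi> i)) \<le> (\<Sum>i=1..N. b i (\<pi> i)) + (\<Sum>i=1..N. b i ((\<tau> \<circ> \<pi>) i))"
    unfolding sum_distrib_left sum.distrib[symmetric] comp_apply
    by (intro sum_mono le) (blast intro: \<pi>_in)+
  also have "\<dots> \<le> up N b + up N b"
    by (intro add_mono up_ge_sum \<pi>(1) permutes_compose[OF \<pi>(1) \<tau>])
  finally show ?thesis using \<pi>(2) by simp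
qed

lemma up_diff_columns: "up N (\<lambda>i j. a i j - g j) = up N a - (\<Sum>j=1..N. g j)"
proof -
  have sum_g: "(\<Sum>i=1..N. g (\<pi> i)) = (\<Sum>j=1..N. g j)" if "\<pi> permutes {1..N}" for \<pi>
    using sum.permute[OF that, of g] by (simp add: comp_def)
  show ?thesis
  proof (rule antisym)
    obtain \<pi> where \<pi>: "\<pi> permutes {1..N}" "up N (\<lambda>i j. a i j - g j) = (\<Sum>i=1..N. a i (\<pi> i) - g (\<pi> i))"
      by (rule up_attained)
    then show "up N (\<lambda>i j. a i j - g j) \<le> up N a - (\<Sum>j=1..N. g j)"
      using up_ge_sum[OF \<pi>(1), of a] sum_g[OF \<pi>(1)] by (simp add: sum_subtractf)
  next
    obtain \<pi> where \<pi>: "\<pi> permutes {1..N}" "up N a = (\<Sum>i=1..N. a i (\<pi> i))"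
      by (rule up_attained)
    then show "up N a - (\<Sum>j=1..N. g j) \<le> up N (\<lambda>i j. a i j - g j)"
      using up_ge_sum[OF \<pi>(1), of "\<lambda>i j. a i j - g j"] sum_g[OF \<pi>(1)] by (simp add: sum_subtractf)
  qed
qed

text \<open>A permutation meets every column once, so the entrywise maximum may be resolved
  by one choice \<open>e j \<in> T\<close> per column.\<close>
lemma up_Max_entries:
  assumes T: "finite T" "T \<noteq> {}"
  shows "up N (\<lambda>i j. Max ((\<lambda>t. f t i j) ` T))
    = Max ((\<lambda>e. up N (\<lambda>i j. f (e j) i j)) ` (PiE {1..N} (\<lambda>_. T)))"
proof (rule antisym)
  obtain \<pi> where \<pi>: "\<pi> permutes {1..N}"
    "up N (\<lambda>i j. Max ((\<lambda>t. f t i j) ` T)) = (\<Sum>i=1..N. Max ((\<lambda>t. f t i (\<pi> i)) ` T))"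
    by (rule up_attained)
  have "Max ((\<lambda>t. f t i j) ` T) \<in> (\<lambda>t. f t i j) ` T" for i j
    using T by (intro Max_in) auto
  then have "\<forall>i j. \<exists>t. t \<in> T \<and> f t i j = Max ((\<lambda>t. f t i j) ` T)"
    by (metis (no_types, lifting) imageE)
  then obtain choice where choice: "\<And>i j. choice i j \<in> T \<and> f (choice i j) i j = Max ((\<lambda>t. f t i j) ` T)"
    by metis
  define e where "e = restrict (\<lambda>j. choice (inv \<pi> j) j) {1..N}"
  have e: "e \<in> PiE {1..N} (\<lambda>_. T)"
    using choice by (auto simp: e_def)
  have "Max ((\<lambda>t. f t i (\<pi> i)) ` T) = f (e (\<pi> i)) i (\<pi> i)" if "i \<in> {1..N}" for i
  proof -
    have "\<pi> i \<in> {1..N}"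
      using that by (simp only: permutes_in_image[OF \<pi>(1)])
    then show ?thesis
      using choice by (simp add: e_def permutes_inverses(2)[OF \<pi>(1)])
  qed
  then have "(\<Sum>i=1..N. Max ((\<lambda>t. f t i (\<pi> i)) ` T)) = (\<Sum>i=1..N. f (e (\<pi> i)) i (\<pi> i))"
    by (rule sum.cong[OF refl])
  also have "\<dots> \<le> up N (\<lambda>i j. f (e j) i j)"
    by (rule up_ge_sum[OF \<pi>(1)])
  also have "\<dots> \<le> Max ((\<lambda>e. up N (\<lambda>i j. f (e j) i j)) ` (PiE {1..N} (\<lambda>_. T)))"
    using e T by (intro Max_ge) (auto simp: finite_PiE)
  finally show "up N (\<lambda>i j. Max ((\<lambda>t. f t i j) ` T)) \<le> \<dots>"
    using \<pi>(2) by simp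
next
  have "up N (\<lambda>i j. f (e j) i j) \<le> up N (\<lambda>i j. Max ((\<lambda>t. f t i j) ` T))"
    if "e \<in> PiE {1..N} (\<lambda>_. T)" for e
    using that T by (intro up_mono Max_ge) auto
  then show "Max ((\<lambda>e. up N (\<lambda>i j. f (e j) i j)) ` (PiE {1..N} (\<lambda>_. T)))
      \<le> up N (\<lambda>i j. Max ((\<lambda>t. f t i j) ` T))"
    using T by (subst Max_le_iff) (auto simp: finite_PiE PiE_eq_empty_iff)
qed

lemma phi_l_plus_1:
  "phi r c c' \<delta> \<epsilon> i (l + 1) m x = max (phi r c c' \<delta> \<epsilon> i l m x) (phi r c c' \<delta> \<epsilon> i l m (x + 1) - \<delta>)"
  by (simp add: phi_def eta_def eta'_def max_def algebra_simps)

lemma phi_m_minus_1: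
  "phi r c c' \<delta> \<epsilon> i l (m - 1) x = max (phi r c c' \<delta> \<epsilon> i l m x) (phi r c c' \<delta> \<epsilon> i l m (x - 1) - \<epsilon>)"
  by (simp add: phi_def eta_def eta'_def max_def algebra_simps)

lemma phi_convex:
  "2 * phi r c c' \<delta> \<epsilon> i l m x \<le> phi r c c' \<delta> \<epsilon> i l m (x - 1) + phi r c c' \<delta> \<epsilon> i l m (x + 1)"
proof -
  have "eta r c \<delta> \<epsilon> i l m (x - 1) + eta r c \<delta> \<epsilon> i l m (x + 1) = 2 * eta r c \<delta> \<epsilon> i l m x"
    "eta' r c' \<delta> \<epsilon> i l m (x - 1) + eta' r c' \<delta> \<epsilon> i l m (x + 1) = 2 * eta' r c' \<delta> \<epsilon> i l m x"
    by (simp_all add: eta_def eta'_def algebra_simps)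
  then show ?thesis
    unfolding phi_def by (simp add: max_def)
qed

lemma sum_fun_upd2:
  fixes g :: "'a \<Rightarrow> 'b \<Rightarrow> 'c::ab_group_add"
  assumes "finite A" "j \<in> A" "k \<in> A" "j \<noteq> k"
  shows "(\<Sum>i\<in>A. g i ((e(j := x, k := y)) i))
    = (\<Sum>i\<in>A. g i (e i)) + (g j x - g j (e j)) + (g k y - g k (e k))"
proof -
  have split: "sum h A = h j + h k + sum h (A - {j} - {k})" for h :: "'a \<Rightarrow> 'c"
    using assms by (simp add: sum.remove[of A j] sum.remove[of "A - {j}" k] algebra_simps)
  have "(\<Sum>i\<in>A - {j} - {k}. g i ((e(j := x, k := y)) i)) = (\<Sum>i\<in>A - {j} - {k}. g i (e i))"
    by (rule sum.cong) auto
  then show ?thesis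
    using split[of "\<lambda>i. g i ((e(j := x, k := y)) i)"] split[of "\<lambda>i. g i (e i)"] assms(4)
    by (simp add: algebra_simps)
qed

definition shifted_up :: "nat \<Rightarrow> (nat \<Rightarrow> int \<Rightarrow> real) \<Rightarrow> (nat \<Rightarrow> int) \<Rightarrow> real" where
  "shifted_up N p e = up N (\<lambda>i j. p i (int j - 1 + e j))"

lemma shifted_up_cong:
  "(\<And>j. j \<in> {1..N} \<Longrightarrow> e j = e' j) \<Longrightarrow> shifted_up N p e = shifted_up N p e'"
  unfolding shifted_up_def by (intro up_cong) auto

text \<open>If \<open>e j = e (Suc j) + 1\<close>, columns \<open>j\<close> and \<open>Suc j\<close> sit at the same position \<open>x\<close> and
  are moved to \<open>x - 1\<close> and \<open>x + 1\<close>; if \<open>e j = e (Suc j) + 2\<close>, they merely trade places.\<close>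
lemma shifted_up_untangle:
  assumes convex: "\<And>i x. 2 * p i x \<le> p i (x - 1) + p i (x + 1)"
    and j: "1 \<le> j" "j < N" and inversion: "e (Suc j) < e j" "e j \<le> e (Suc j) + 2"
  shows "shifted_up N p e \<le> shifted_up N p (e(j := e j - 1, Suc j := e (Suc j) + 1))"
    (is "_ \<le> shifted_up N p ?e'")
proof -
  have swap: "transpose j (Suc j) permutes {1..N}"
    using j by (intro permutes_swap_id) auto
  consider (equal) "e j = e (Suc j) + 1" | (crossed) "e j = e (Suc j) + 2"
    using inversion by linarith
  then show ?thesis
  proof cases
    case equal
    show ?thesis unfolding shifted_up_def
    proof (rule up_le_by_exchange[OF swap])
      fix i k
      show "2 * p i (int k - 1 + e k)
          \<le> p i (int k - 1 + ?e' k) + p i (int (transpose j (Suc j) k) - 1 + ?e' (transpose j (Suc j) k))"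
        using convex[of i "int j - 1 + e j"] equal
        by (cases "k = j \<or> k = Suc j") (auto simp: transpose_def algebra_simps)
    qed
  next
    case crossed
    show ?thesis unfolding shifted_up_def
      by (rule up_le_permuted[OF swap]) (use crossed in \<open>auto simp: transpose_def algebra_simps\<close>)
  qed
qed

lemma down_closed_eq_atLeastAtMost:
  assumes S: "S \<subseteq> {1..(N::nat)}" and closed: "\<And>i k. k \<in> S \<Longrightarrow> 1 \<le> i \<Longrightarrow> i \<le> k \<Longrightarrow> i \<in> S"
  shows "S = {1..card S}"
proof (cases "S = {}")
  case False
  have "finite S"
    using S finite_subset by blast
  then have "S = {1..Max S}"
    using S closed Max_in[OF _ False] by (intro equalityI) auto
  then show ?thesis
    by (metis card_atLeastAtMost diff_Suc_1)
qed simp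

lemma up_closed_eq_atLeastAtMost:
  assumes S: "S \<subseteq> {1..(N::nat)}" and closed: "\<And>i k. k \<in> S \<Longrightarrow> k \<le> i \<Longrightarrow> i \<le> N \<Longrightarrow> i \<in> S"
  shows "S = {N + 1 - card S..N}"
proof (cases "S = {}")
  case False
  have "finite S"
    using S finite_subset by blast
  then have min: "Min S \<in> S"
    using Min_in False by blast
  have "S = {Min S..N}"
    using S \<open>finite S\<close> by (intro equalityI) (auto intro: closed[OF min])
  moreover have "1 \<le> Min S" "Min S \<le> N"
    using min S by auto
  ultimately obtain k where "S = {k..N}" "1 \<le> k" "k \<le> N"
    by blast
  then show ?thesis
    by simp
qed simp

definition block_shift :: "nat \<Rightarrow> nat \<Rightarrow> nat \<Rightarrow> nat \<Rightarrow> int" where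
  "block_shift N a b j = (if j \<le> a then -1 else if N - b < j then 1 else 0)"

lemma sublevel_set_eq_atLeastAtMost:
  assumes mono: "\<And>i k. 1 \<le> i \<Longrightarrow> i \<le> k \<Longrightarrow> k \<le> N \<Longrightarrow> e i \<le> (e k :: 'a::linorder)"
  shows "{j\<in>{1..N}. e j \<le> c} = {1..card {j\<in>{1..N}. e j \<le> c}}"
  by (rule down_closed_eq_atLeastAtMost[of _ N]) (auto intro: order_trans[OF mono])

lemma superlevel_set_eq_atLeastAtMost:
  assumes mono: "\<And>i k. 1 \<le> i \<Longrightarrow> i \<le> k \<Longrightarrow> k \<le> N \<Longrightarrow> e i \<le> (e k :: 'a::linorder)"
  shows "{j\<in>{1..N}. c \<le> e j} = {N + 1 - card {j\<in>{1..N}. c \<le> e j}..N}"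
  by (rule up_closed_eq_atLeastAtMost) (auto intro: order_trans[OF _ mono])

lemma sorted_shift_eq_block_shift:
  assumes vals: "\<forall>j\<in>{1..N}. e j \<in> {-1, 0, 1}"
    and sorted: "\<And>j. 1 \<le> j \<Longrightarrow> j < N \<Longrightarrow> e j \<le> e (Suc j)"
  obtains a b where "a + b \<le> N" "\<And>j. j \<in> {1..N} \<Longrightarrow> e j = block_shift N a b j"
proof -
  have mono: "e i \<le> e k" if "1 \<le> i" "i \<le> k" "k \<le> N" for i k
  proof (rule lift_Suc_mono_le_ivl[of "{1..<N}"])
    show "\<And>n. n \<in> {1..<N} \<Longrightarrow> e n \<le> e (Suc n)"
      using sorted by simp
  qed (use that in auto)
  define D where "D = {j\<in>{1..N}. e j \<le> -1}"
  define U where "U = {j\<in>{1..N}. 1 \<le> e j}"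
  have D: "D = {1..card D}"
    unfolding D_def by (rule sublevel_set_eq_atLeastAtMost[OF mono])
  have U: "U = {N + 1 - card U..N}"
    unfolding U_def by (rule superlevel_set_eq_atLeastAtMost[OF mono])
  have "card D + card U = card (D \<union> U)"
    by (rule card_Un_disjoint[symmetric]) (auto simp: D_def U_def)
  also have "\<dots> \<le> card {1..N}"
    by (rule card_mono) (auto simp: D_def U_def)
  finally have "card D + card U \<le> N"
    by simp
  moreover have "e j = block_shift N (card D) (card U) j" if "j \<in> {1..N}" for j
  proof -
    have "j \<in> D \<longleftrightarrow> j \<le> card D"
      using that by (subst D) auto
    moreover have "j \<in> U \<longleftrightarrow> N - card U < j"
      using that \<open>card D + card U \<le> N\<close> by (subst U) auto
    moreover have "e j \<in> {-1, 0, 1}"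
      using that vals by blast
    ultimately show ?thesis
      using that by (auto simp: block_shift_def D_def U_def)
  qed
  ultimately show ?thesis
    using that by blast
qed

lemma shift_untangle_step:
  assumes convex: "\<And>i x. 2 * p i x \<le> p i (x - 1) + p i (x + 1)"
    and w: "2 * w 0 \<le> w (-1) + w 1" and T: "T \<subseteq> {-1, 0, 1}" "0 \<in> T"
    and e: "\<forall>k\<in>{1..N}. e k \<in> T" and j: "1 \<le> j" "j < N" "e (Suc j) < e j"
  defines "e' \<equiv> e(j := e j - 1, Suc j := e (Suc j) + 1)"
  shows "\<forall>k\<in>{1..N}. e' k \<in> T" "(\<Sum>k=1..N. int k * e' k) = (\<Sum>k=1..N. int k * e k) + 1"
    "shifted_up N p e - (\<Sum>k=1..N. w (e k)) \<le> shifted_up N p e' - (\<Sum>k=1..N. w (e' k))"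
proof -
  have ej: "e j \<in> T" "e (Suc j) \<in> T"
    using e j by auto
  then have "e j \<in> {-1, 0, 1}" "e (Suc j) \<in> {-1, 0, 1}"
    using T by auto
  then consider "e j = 1" "e (Suc j) = 0" | "e j = 0" "e (Suc j) = -1" | "e j = 1" "e (Suc j) = -1"
    using j(3) by auto
  note cases = this
  have "e j - 1 \<in> T" "e (Suc j) + 1 \<in> T"
    using ej T by (cases rule: cases; simp)+
  then show "\<forall>k\<in>{1..N}. e' k \<in> T"
    using e by (auto simp: e'_def)
  have jN: "finite {1..N}" "j \<in> {1..N}" "Suc j \<in> {1..N}" "j \<noteq> Suc j"
    using j by auto
  show "(\<Sum>k=1..N. int k * e' k) = (\<Sum>k=1..N. int k * e k) + 1"
    unfolding e'_def
    using sum_fun_upd2[OF jN, where g="\<lambda>k v. int k * v" and e=e and x="e j - 1" and y="e (Suc j) + 1"]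
    by (simp add: algebra_simps)
  have "shifted_up N p e \<le> shifted_up N p e'"
    unfolding e'_def using j by (intro shifted_up_untangle convex) (cases rule: cases; simp)+
  moreover have "w (e j - 1) + w (e (Suc j) + 1) \<le> w (e j) + w (e (Suc j))"
    using w by (cases rule: cases) auto
  then have "(\<Sum>k=1..N. w (e' k)) \<le> (\<Sum>k=1..N. w (e k))"
    unfolding e'_def
    using sum_fun_upd2[OF jN, where g="\<lambda>k v. w v" and e=e and x="e j - 1" and y="e (Suc j) + 1"]
    by simp
  ultimately show "shifted_up N p e - (\<Sum>k=1..N. w (e k)) \<le> shifted_up N p e' - (\<Sum>k=1..N. w (e' k))"
    by simp
qed

text \<open>Untangling inversions one at a time terminates, as the potential \<open>\<Sum>j. j * e j\<close> grows by one
  at each step and is bounded.\<close>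
lemma shifted_up_le_block_shift:
  assumes convex: "\<And>i x. 2 * p i x \<le> p i (x - 1) + p i (x + 1)"
    and w: "2 * w 0 \<le> w (-1) + w 1" and T: "T \<subseteq> {-1, 0, 1}" "0 \<in> T"
    and e: "\<forall>j\<in>{1..N}. e j \<in> T"
  obtains a b where "a + b \<le> N" "\<forall>j\<in>{1..N}. block_shift N a b j \<in> T"
    "shifted_up N p e - (\<Sum>j=1..N. w (e j))
       \<le> shifted_up N p (block_shift N a b) - (\<Sum>j=1..N. w (block_shift N a b j))"
proof -
  define bound where "bound = (\<Sum>j=1..N. int j)"
  have potential_le: "(\<Sum>j=1..N. int j * e j) \<le> bound" if "\<forall>j\<in>{1..N}. e j \<in> T" for e
    unfolding bound_def
  proof (rule sum_mono)
    fix j assume "j \<in> {1..N}"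
    then have "e j \<in> {-1, 0, 1}"
      using that T by blast
    then show "int j * e j \<le> int j"
      by auto
  qed
  show ?thesis using e that
  proof (induction "nat (bound - (\<Sum>j=1..N. int j * e j))" arbitrary: e rule: less_induct)
    case less
    show ?case
    proof (cases "\<forall>j. 1 \<le> j \<longrightarrow> j < N \<longrightarrow> e j \<le> e (Suc j)")
      case True
      then obtain a b where ab: "a + b \<le> N" "\<And>j. j \<in> {1..N} \<Longrightarrow> e j = block_shift N a b j"
        using sorted_shift_eq_block_shift[of N e] less.prems(1) T by blast
      then have "shifted_up N p e = shifted_up N p (block_shift N a b)"
        "(\<Sum>j=1..N. w (e j)) = (\<Sum>j=1..N. w (block_shift N a b j))"
        by (auto intro: shifted_up_cong sum.cong)
      then show ?thesis
        using less.prems ab by (intro less.prems(2)[OF ab(1)]) auto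
    next
      case False
      then obtain j where j: "1 \<le> j" "j < N" "e (Suc j) < e j"
        by auto
      note step = shift_untangle_step[where p=p, OF convex w T less.prems(1) j]
      show ?thesis
        using less.hyps[OF _ step(1)] less.prems(2) step(2,3) potential_le[OF step(1)] by fastforce
    qed
  qed
qed

lemma block_shift_positions:
  assumes "a + b \<le> N"
  shows "sorted_list_of_set ({-1..int N} - {int a - 1, int N - int b})
    = map (\<lambda>j. int j - 1 + block_shift N a b j) [1..<N+1]"
proof (rule sorted_distinct_set_unique)
  have "sorted_wrt (<) (map (\<lambda>j. int j - 1 + block_shift N a b j) [1..<N+1])"
    unfolding sorted_wrt_map
    by (rule sorted_wrt_mono_rel[OF _ sorted_wrt_upt]) (auto simp: block_shift_def)
  then show "sorted (map (\<lambda>j. int j - 1 + block_shift N a b j) [1..<N+1])"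
    "distinct (map (\<lambda>j. int j - 1 + block_shift N a b j) [1..<N+1])"
    by (simp_all add: strict_sorted_iff)
  show "set (sorted_list_of_set ({-1..int N} - {int a - 1, int N - int b}))
      = set (map (\<lambda>j. int j - 1 + block_shift N a b j) [1..<N+1])"
  proof (rule set_eqI, rule iffI)
    fix x assume "x \<in> set (sorted_list_of_set ({-1..int N} - {int a - 1, int N - int b}))"
    then have x: "x \<in> {-1..int N}" "x \<noteq> int a - 1" "x \<noteq> int N - int b"
      by auto
    consider "x < int a - 1" | "int a - 1 < x" "x < int N - int b" | "int N - int b < x"
      using x by linarith
    then have "\<exists>j\<in>{1..N}. x = int j - 1 + block_shift N a b j"
    proof cases
      case 1 then show ?thesis
        using x assms by (intro bexI[of _ "nat (x + 2)"]) (auto simp: block_shift_def)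
    next
      case 2 then show ?thesis
        using x assms by (intro bexI[of _ "nat (x + 1)"]) (auto simp: block_shift_def)
    next
      case 3 then show ?thesis
        using x assms by (intro bexI[of _ "nat x"]) (auto simp: block_shift_def)
    qed
    then show "x \<in> set (map (\<lambda>j. int j - 1 + block_shift N a b j) [1..<N+1])"
      by auto
  qed (use assms in \<open>auto simp: block_shift_def split: if_splits\<close>)
qed auto

definition up_without :: "nat \<Rightarrow> (nat \<Rightarrow> int \<Rightarrow> real) \<Rightarrow> int \<Rightarrow> int \<Rightarrow> real" where
  "up_without N p \<alpha> \<beta> = up N (\<lambda>i k. p i (sorted_list_of_set ({-1..int N} - {\<alpha>, \<beta>}) ! (k - 1)))"

lemma shifted_up_block_shift:
  assumes "a + b \<le> N"
  shows "shifted_up N p (block_shift N a b) = up_without N p (int a - 1) (int N - int b)"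
  unfolding shifted_up_def up_without_def block_shift_positions[OF assms]
  by (intro up_cong) (auto simp del: upt_Suc)

lemma sum_block_shift:
  assumes "a + b \<le> N"
  shows "(\<Sum>j=1..N. w (block_shift N a b j))
    = real a * w (-1) + real (N - a - b) * w 0 + real b * w 1"
proof -
  have split: "{1..N} = {1..a} \<union> ({a<..N - b} \<union> {N - b<..N})"
    using assms by auto
  have "(\<Sum>j=1..N. w (block_shift N a b j))
      = (\<Sum>j=1..a. w (block_shift N a b j))
        + ((\<Sum>j\<in>{a<..N - b}. w (block_shift N a b j)) + (\<Sum>j\<in>{N - b<..N}. w (block_shift N a b j)))"
    unfolding split using assms by (subst sum.union_disjoint, auto, subst sum.union_disjoint, auto)
  also have "\<dots> = (\<Sum>j=1..a. w (-1)) + ((\<Sum>j\<in>{a<..N - b}. w 0) + (\<Sum>j\<in>{N - b<..N}. w 1))"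
    using assms by (intro arg_cong2[where f="(+)"] sum.cong) (auto simp: block_shift_def)
  finally show ?thesis
    using assms by (simp add: algebra_simps of_nat_diff)
qed

lemma block_shift_in_iff:
  assumes "a + b \<le> N" "0 \<in> T"
  shows "(\<forall>j\<in>{1..N}. block_shift N a b j \<in> T) \<longleftrightarrow> (0 < a \<longrightarrow> -1 \<in> T) \<and> (0 < b \<longrightarrow> 1 \<in> T)"
proof -
  have "block_shift N a b 1 = -1" if "0 < a"
    using that by (simp add: block_shift_def)
  moreover have "block_shift N a b N = 1" if "0 < b"
    using that assms(1) by (simp add: block_shift_def)
  ultimately show ?thesis
    using assms by (auto simp: block_shift_def)
qed

lemma Max_image_eq_if_dominated:
  fixes f :: "'a \<Rightarrow> 'c::linorder"
  assumes "finite A" "finite B"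
    and "\<And>x. x \<in> A \<Longrightarrow> \<exists>y\<in>B. f x \<le> g y" and "\<And>y. y \<in> B \<Longrightarrow> \<exists>x\<in>A. g y \<le> f x"
  shows "Max (f ` A) = Max (g ` B)"
  using assms by (intro Max_eq_if) fastforce+

lemma Max_shifts_eq_Max_block_shifts:
  assumes convex: "\<And>i x. 2 * p i x \<le> p i (x - 1) + p i (x + 1)"
    and w: "2 * w 0 \<le> w (-1) + w 1" and T: "T \<subseteq> {-1, 0, 1}" "0 \<in> T"
  shows "Max ((\<lambda>e. shifted_up N p e - (\<Sum>j=1..N. w (e j))) ` PiE {1..N} (\<lambda>_. T))
    = Max ((\<lambda>(a, b). shifted_up N p (block_shift N a b) - (\<Sum>j=1..N. w (block_shift N a b j)))
           ` {(a, b). a + b \<le> N \<and> (0 < a \<longrightarrow> -1 \<in> T) \<and> (0 < b \<longrightarrow> 1 \<in> T)})"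
    (is "Max (?value ` _) = Max (_ ` ?pairs)")
proof (rule Max_image_eq_if_dominated)
  have "finite T"
    using T(1) finite_subset by blast
  then show "finite (PiE {1..N} (\<lambda>_. T))"
    by (simp add: finite_PiE)
  have "?pairs \<subseteq> {0..N} \<times> {0..N}"
    by auto
  then show "finite ?pairs"
    using finite_subset by blast
next
  fix e assume "e \<in> PiE {1..N} (\<lambda>_. T)"
  then have "\<forall>j\<in>{1..N}. e j \<in> T"
    by auto
  then obtain a b where ab: "a + b \<le> N" "\<forall>j\<in>{1..N}. block_shift N a b j \<in> T"
    "?value e \<le> ?value (block_shift N a b)"
    using shifted_up_le_block_shift[where p=p, OF convex w T] by blast
  then show "\<exists>y\<in>?pairs. ?value e \<le> (\<lambda>(a, b). ?value (block_shift N a b)) y"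
    using block_shift_in_iff[OF ab(1) T(2)] by (intro bexI[of _ "(a, b)"]) auto
next
  fix y assume "y \<in> ?pairs"
  then obtain a b where ab: "y = (a, b)" "a + b \<le> N" "(0 < a \<longrightarrow> -1 \<in> T) \<and> (0 < b \<longrightarrow> 1 \<in> T)"
    by auto
  let ?e = "restrict (block_shift N a b) {1..N}"
  have "?e \<in> PiE {1..N} (\<lambda>_. T)"
    using ab(3) block_shift_in_iff[OF ab(2) T(2)] by simp
  moreover have "shifted_up N p ?e = shifted_up N p (block_shift N a b)"
    by (rule shifted_up_cong) simp
  moreover have "(\<Sum>j=1..N. w (?e j)) = (\<Sum>j=1..N. w (block_shift N a b j))"
    by (rule sum.cong) simp_all
  ultimately show "\<exists>e\<in>PiE {1..N} (\<lambda>_. T). (\<lambda>(a, b). ?value (block_shift N a b)) y \<le> ?value e"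
    unfolding ab(1) by (intro bexI[of _ ?e]) simp_all
qed

lemma up_Max_shifts:
  assumes convex: "\<And>i x. 2 * p i x \<le> p i (x - 1) + p i (x + 1)"
    and w: "2 * w 0 \<le> w (-1) + w 1" and T: "T \<subseteq> {-1, 0, 1}" "0 \<in> T"
  shows "up N (\<lambda>i j. Max ((\<lambda>t. p i (int j - 1 + t) - w t) ` T))
    = Max ((\<lambda>(a, b). up_without N p (int a - 1) (int N - int b)
                     - (real a * w (-1) + real (N - a - b) * w 0 + real b * w 1))
           ` {(a, b). a + b \<le> N \<and> (0 < a \<longrightarrow> -1 \<in> T) \<and> (0 < b \<longrightarrow> 1 \<in> T)})"
proof -
  let ?value = "\<lambda>e. shifted_up N p e - (\<Sum>j=1..N. w (e j))"
  let ?pairs = "{(a, b). a + b \<le> N \<and> (0 < a \<longrightarrow> -1 \<in> T) \<and> (0 < b \<longrightarrow> 1 \<in> T)}"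
  have "finite T"
    using T(1) finite_subset by blast
  have "up N (\<lambda>i j. Max ((\<lambda>t. p i (int j - 1 + t) - w t) ` T))
      = Max ((\<lambda>e. up N (\<lambda>i j. p i (int j - 1 + e j) - w (e j))) ` PiE {1..N} (\<lambda>_. T))"
    using T(2) by (intro up_Max_entries[OF \<open>finite T\<close>, where f="\<lambda>t i j. p i (int j - 1 + t) - w t"]) blast
  also have "\<dots> = Max (?value ` PiE {1..N} (\<lambda>_. T))"
    by (simp only: up_diff_columns shifted_up_def)
  also have "\<dots> = Max ((\<lambda>(a, b). ?value (block_shift N a b)) ` ?pairs)"
    by (rule Max_shifts_eq_Max_block_shifts[where p=p, OF convex w T])
  also have "\<dots> = Max ((\<lambda>(a, b). up_without N p (int a - 1) (int N - int b)
                     - (real a * w (-1) + real (N - a - b) * w 0 + real b * w 1)) ` ?pairs)"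
  proof (intro arg_cong[where f=Max] image_cong refl)
    fix x assume "x \<in> ?pairs"
    then obtain a b where "x = (a, b)" "a + b \<le> N"
      by auto
    then show "(\<lambda>(a, b). ?value (block_shift N a b)) x
        = (\<lambda>(a, b). up_without N p (int a - 1) (int N - int b)
                     - (real a * w (-1) + real (N - a - b) * w 0 + real b * w 1)) x"
      by (simp only: case_prod_conv shifted_up_block_shift sum_block_shift)
  qed
  finally show ?thesis .
qed

lemma Max_image_reindex:
  "S = g ` K \<Longrightarrow> (\<And>k. k \<in> K \<Longrightarrow> f (g k) = h k) \<Longrightarrow> Max (f ` S) = Max (h ` K)"
  by (simp add: image_image cong: image_cong)

lemma tau_eq_Max_tauc:
  assumes column: "\<And>i x. phi r c c' \<delta> \<epsilon> i l' m' (n' + x)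
      = Max ((\<lambda>t. phi r c c' \<delta> \<epsilon> i l m (n + x + t) - w t) ` T)"
    and w: "2 * w 0 \<le> w (-1) + w 1" and T: "T \<subseteq> {-1, 0, 1}" "0 \<in> T"
  shows "tau N r c c' \<delta> \<epsilon> l' m' n'
    = Max ((\<lambda>(a, b). tauc N r c c' \<delta> \<epsilon> l m n (int a - 1) (int N - int b)
                     - (real a * w (-1) + real (N - a - b) * w 0 + real b * w 1))
           ` {(a, b). a + b \<le> N \<and> (0 < a \<longrightarrow> -1 \<in> T) \<and> (0 < b \<longrightarrow> 1 \<in> T)})"
proof -
  let ?p = "\<lambda>i x. phi r c c' \<delta> \<epsilon> i l m (n + x)"
  have "tau N r c c' \<delta> \<epsilon> l' m' n' = up N (\<lambda>i j. Max ((\<lambda>t. ?p i (int j - 1 + t) - w t) ` T))"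
    unfolding tau_def using column[of _ "int _ - 1"] by (intro up_cong) (simp add: algebra_simps)
  also have "\<dots> = Max ((\<lambda>(a, b). up_without N ?p (int a - 1) (int N - int b)
                     - (real a * w (-1) + real (N - a - b) * w 0 + real b * w 1))
           ` {(a, b). a + b \<le> N \<and> (0 < a \<longrightarrow> -1 \<in> T) \<and> (0 < b \<longrightarrow> 1 \<in> T)})"
    using phi_convex[of r c c' \<delta> \<epsilon> _ l m "n + _"] w T by (intro up_Max_shifts) (simp_all add: algebra_simps)
  finally show ?thesis
    by (simp add: tauc_def up_without_def)
qed

lemma tau_eq_tauc: "tau N r c c' \<delta> \<epsilon> l m n = tauc N r c c' \<delta> \<epsilon> l m n (-1) (int N)"
proof -
  have "{(a, b). a + b \<le> N \<and> (0 < a \<longrightarrow> -1 \<in> {0::int}) \<and> (0 < b \<longrightarrow> 1 \<in> {0::int})} = {(0, 0)}"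
    by auto
  then show ?thesis
    by (subst tau_eq_Max_tauc[where w="\<lambda>_. 0" and T="{0}" and l=l and m=m and n=n]) simp_all
qed

lemma tau_eq_Max_tauc_reindexed:
  assumes column: "\<And>i x. phi r c c' \<delta> \<epsilon> i l' m' (n' + x)
      = Max ((\<lambda>t. phi r c c' \<delta> \<epsilon> i l m (n + x + t) - w t) ` T)"
    and w: "2 * w 0 \<le> w (-1) + w 1" and T: "T \<subseteq> {-1, 0, 1}" "0 \<in> T"
    and pairs: "{(a, b). a + b \<le> N \<and> (0 < a \<longrightarrow> -1 \<in> T) \<and> (0 < b \<longrightarrow> 1 \<in> T)} = g ` K"
    and terms: "\<And>k. k \<in> K \<Longrightarrow> (case g k of (a, b) \<Rightarrow> tauc N r c c' \<delta> \<epsilon> l m n (int a - 1) (int N - int b)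
                     - (real a * w (-1) + real (N - a - b) * w 0 + real b * w 1)) = h k"
  shows "tau N r c c' \<delta> \<epsilon> l' m' n' = Max (h ` K)"
  unfolding tau_eq_Max_tauc[OF column w T] using pairs terms by (rule Max_image_reindex)

lemma tau_l_plus_1:
  assumes "\<delta> \<ge> 0"
  shows "tau N r c c' \<delta> \<epsilon> (l + 1) m n =
    Max ((\<lambda>k. tauc N r c c' \<delta> \<epsilon> l m n (-1) (int N - int k) - real k * \<delta>) ` {0..N})"
  using assms
  by (intro tau_eq_Max_tauc_reindexed[where w="\<lambda>t. if t = 1 then \<delta> else 0" and T="{0, 1}"
        and g="\<lambda>k. (0, k)"]) (auto simp: phi_l_plus_1 add.assoc)

lemma tau_m_minus_1:
  assumes "\<epsilon> \<ge> 0"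
  shows "tau N r c c' \<delta> \<epsilon> l (m - 1) n =
    Max ((\<lambda>k. tauc N r c c' \<delta> \<epsilon> l m n (int k - 1) (int N) - real k * \<epsilon>) ` {0..N})"
  using assms
  by (intro tau_eq_Max_tauc_reindexed[where w="\<lambda>t. if t = -1 then \<epsilon> else 0" and T="{-1, 0}"
        and g="\<lambda>k. (k, 0)"]) (auto simp: phi_m_minus_1 max.commute)

text \<open>Here and below the column weights are extended linearly to \<open>t = \<plusminus>1\<close>, keeping them midpoint
  convex.\<close>
lemma tau_l_plus_1_n_minus_1:
  "tau N r c c' \<delta> \<epsilon> (l + 1) m (n - 1) =
    Max ((\<lambda>k. tauc N r c c' \<delta> \<epsilon> l m n (int N - int k - 1) (int N) - real k * \<delta>) ` {0..N})"
  using phi_l_plus_1[of r c c' \<delta> \<epsilon> _ l m "n - 1 + _"]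
  by (intro tau_eq_Max_tauc_reindexed[where w="\<lambda>t. \<delta> * of_int (t + 1)" and T="{-1, 0}"
        and g="\<lambda>k. (N - k, 0)"]) (auto simp: algebra_simps of_nat_diff image_iff Bex_def, presburger)

lemma tau_m_minus_1_n_plus_1:
  "tau N r c c' \<delta> \<epsilon> l (m - 1) (n + 1) =
    Max ((\<lambda>k. tauc N r c c' \<delta> \<epsilon> l m n (-1) (int k) - real k * \<epsilon>) ` {0..N})"
  using phi_m_minus_1[of r c c' \<delta> \<epsilon> _ l m "n + 1 + _"]
  by (intro tau_eq_Max_tauc_reindexed[where w="\<lambda>t. \<epsilon> * of_int (1 - t)" and T="{0, 1}"
        and g="\<lambda>k. (0, N - k)"]) (auto simp: max.commute algebra_simps of_nat_diff image_iff Bex_def, presburger)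

lemma tau_l_plus_1_m_minus_1_eq_Max_tauc:
  assumes "\<delta> \<ge> 0" "\<epsilon> \<ge> 0"
  shows "tau N r c c' \<delta> \<epsilon> (l + 1) (m - 1) n
    = Max ((\<lambda>(a, b). tauc N r c c' \<delta> \<epsilon> l m n (int a - 1) (int N - int b) - real a * \<epsilon> - real b * \<delta>)
           ` {(a, b). a + b \<le> N})"
proof -
  let ?w = "\<lambda>t::int. if t = 1 then \<delta> else if t = -1 then \<epsilon> else 0"
  have column: "phi r c c' \<delta> \<epsilon> i (l + 1) (m - 1) (n + x)
      = Max ((\<lambda>t. phi r c c' \<delta> \<epsilon> i l m (n + x + t) - ?w t) ` {-1, 0, 1})" for i x
    using phi_m_minus_1[of r c c' \<delta> \<epsilon> i l m "n + x + 1"] assms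
    by (simp add: phi_l_plus_1 phi_m_minus_1 max_def)
  have "tau N r c c' \<delta> \<epsilon> (l + 1) (m - 1) n
      = Max ((\<lambda>(a, b). tauc N r c c' \<delta> \<epsilon> l m n (int a - 1) (int N - int b)
                     - (real a * ?w (-1) + real (N - a - b) * ?w 0 + real b * ?w 1))
           ` {(a, b). a + b \<le> N \<and> (0 < a \<longrightarrow> -1 \<in> {-1::int, 0, 1}) \<and> (0 < b \<longrightarrow> 1 \<in> {-1::int, 0, 1})})"
    using assms by (intro tau_eq_Max_tauc column) auto
  then show ?thesis
    by (simp add: case_prod_beta' algebra_simps)
qed

lemma image_minus_nat_atLeastAtMost: "(\<lambda>i::nat. A - int i) ` {0..K} = {A - int K..A}"
proof (rule set_eqI, rule iffI)
  fix x assume "x \<in> {A - int K..A}"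
  then show "x \<in> (\<lambda>i::nat. A - int i) ` {0..K}"
    by (intro image_eqI[of _ _ "nat (A - x)"]) auto
qed auto

lemma image_plus_nat_atLeastAtMost: "(\<lambda>i::nat. B + int i) ` {0..K} = {B..B + int K}"
proof (rule set_eqI, rule iffI)
  fix x assume "x \<in> {B..B + int K}"
  then show "x \<in> (\<lambda>i::nat. B + int i) ` {0..K}"
    by (intro image_eqI[of _ _ "nat (x - B)"]) auto
qed auto

lemma Max_image_atLeastAtMost_int_succ:
  assumes "lo \<le> h"
  shows "Max (f ` {lo..h + 1}) = max (f (h + 1)) (Max (f ` {lo..(h::int)}))"
proof -
  have "{lo..h + 1} = insert (h + 1) {lo..h}"
    using assms by auto
  then show ?thesis
    using assms by (simp add: Max_insert)
qed

context
  fixes N :: nat and r c c' :: "nat \<Rightarrow> real" and \<delta> \<epsilon> :: real and l m n :: int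
begin

private abbreviation (input) "tc \<equiv> tauc N r c c' \<delta> \<epsilon> l m n"
private abbreviation (input) "psi \<equiv> Psi N r c c' \<delta> \<epsilon> l m n"

text \<open>The four cases defining \<open>Psi\<close> are one formula: the maximum of \<open>tauc \<alpha> \<beta>\<close> along the
  antidiagonal \<open>\<alpha> + \<beta> = N - 1 - k1 + k2\<close> with \<open>-1 \<le> \<alpha> \<le> k2 - 1\<close> and \<open>k2 \<le> \<beta> \<le> N\<close>.\<close>
lemma Psi_eq_Max_antidiagonal:
  assumes "k1 \<le> N" "k2 \<le> N"
  shows "psi k1 k2 = Max ((\<lambda>\<alpha>. tc \<alpha> (int N - 1 - int k1 + int k2 - \<alpha>))
    ` {max (-1) (int k2 - int k1 - 1)..min (int k2 - 1) (int N - int k1 - 1)})"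
    (is "_ = Max (?F ` _)")
proof -
  have down: "(\<lambda>i::nat. ?F (A - int i)) ` {0..K} = ?F ` {A - int K..A}" for A K
    by (simp only: image_minus_nat_atLeastAtMost[symmetric] image_image)
  have up: "(\<lambda>i::nat. ?F (B + int i)) ` {0..K} = ?F ` {B..B + int K}" for B K
    by (simp only: image_plus_nat_atLeastAtMost[symmetric] image_image)
  consider "int k1 \<ge> int k2 \<and> int N - int k1 \<ge> int k2"
    | "\<not> (int k1 \<ge> int k2 \<and> int N - int k1 \<ge> int k2)" "int N - int k1 \<ge> int k2 \<and> int k2 \<ge> int k1"
    | "\<not> (int k1 \<ge> int k2 \<and> int N - int k1 \<ge> int k2)" "\<not> (int N - int k1 \<ge> int k2 \<and> int k2 \<ge> int k1)"
      "int k1 \<ge> int k2 \<and> int k2 \<ge> int N - int k1"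
    | "int k2 > int k1" "int k2 > int N - int k1"
    by linarith
  then show ?thesis
  proof cases
    case 1
    then have "max (-1) (int k2 - int k1 - 1) = int k2 - 1 - int k2"
      "min (int k2 - 1) (int N - int k1 - 1) = int k2 - 1"
      by auto
    then show ?thesis
      using 1 down[of "int k2 - 1" k2] unfolding Psi_def Let_def by (simp add: algebra_simps)
  next
    case 2
    then have "max (-1) (int k2 - int k1 - 1) = int k2 - 1 - int k1"
      "min (int k2 - 1) (int N - int k1 - 1) = int k2 - 1"
      by auto
    then show ?thesis
      using 2 down[of "int k2 - 1" k1] unfolding Psi_def Let_def by (simp add: algebra_simps)
  next
    case 3
    then have "max (-1) (int k2 - int k1 - 1) = -1"
      "min (int k2 - 1) (int N - int k1 - 1) = int N - int k1 - 1" "int (N - k1) = int N - int k1"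
      using assms by auto
    then show ?thesis
      using 3 up[of "-1" "N - k1"] unfolding Psi_def Let_def by (simp add: algebra_simps)
  next
    case 4
    then have "max (-1) (int k2 - int k1 - 1) = int k2 - int k1 - 1"
      "min (int k2 - 1) (int N - int k1 - 1) = int N - int k1 - 1" "int (N - k2) = int N - int k2"
      using assms by auto
    then show ?thesis
      using 4 down[of "int N - int k1 - 1" "N - k2"] unfolding Psi_def Let_def by (simp add: algebra_simps)
  qed
qed

lemma tauc_le_Psi:
  assumes "a + b \<le> N"
  shows "tc (int a - 1) (int N - int b) \<le> psi b a"
proof -
  have "tc (int a - 1) (int N - int b)
      \<le> Max ((\<lambda>\<alpha>. tc \<alpha> (int N - 1 - int b + int a - \<alpha>))
          ` {max (-1) (int a - int b - 1)..min (int a - 1) (int N - int b - 1)})"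
    using assms by (intro Max_ge image_eqI[of _ _ "int a - 1"]) auto
  also have "\<dots> = psi b a"
    using assms by (intro Psi_eq_Max_antidiagonal[symmetric]) auto
  finally show ?thesis .
qed

lemma Psi_attained:
  assumes "k1 \<le> N" "k2 \<le> N"
  obtains a b where "a + b \<le> N" "a \<le> k2" "b \<le> k1" "psi k1 k2 = tc (int a - 1) (int N - int b)"
proof -
  let ?I = "{max (-1) (int k2 - int k1 - 1)..min (int k2 - 1) (int N - int k1 - 1)}"
  have "psi k1 k2 \<in> (\<lambda>\<alpha>. tc \<alpha> (int N - 1 - int k1 + int k2 - \<alpha>)) ` ?I"
    unfolding Psi_eq_Max_antidiagonal[OF assms] using assms by (intro Max_in) auto
  then obtain \<alpha> where \<alpha>: "\<alpha> \<in> ?I" "psi k1 k2 = tc \<alpha> (int N - 1 - int k1 + int k2 - \<alpha>)"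
    by blast
  show ?thesis
  proof (rule that[of "nat (\<alpha> + 1)" "nat (int k1 - int k2 + 1 + \<alpha>)"])
    show "psi k1 k2 = tc (int (nat (\<alpha> + 1)) - 1) (int N - int (nat (int k1 - int k2 + 1 + \<alpha>)))"
      using \<alpha> by (simp add: algebra_simps)
  qed (use \<alpha>(1) in auto)
qed

lemma Psi_pred_eq_Max_antidiagonal:
  assumes "k1 \<in> {1..N}" "k2 \<in> {1..N}"
  shows "psi (k1 - 1) (k2 - 1) = Max ((\<lambda>\<alpha>. tc \<alpha> (int N - 1 - int k1 + int k2 - \<alpha>))
    ` {max (-1) (int k2 - int k1 - 1)..min (int k2 - 2) (int N - int k1)})"
proof -
  have "k1 - 1 \<le> N" "k2 - 1 \<le> N"
    using assms by auto
  then show ?thesis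
    using Psi_eq_Max_antidiagonal[of "k1 - 1" "k2 - 1"] assms by (simp add: of_nat_diff algebra_simps)
qed

lemma Psi_step_below:
  assumes k: "k1 \<in> {1..N}" "k2 \<in> {1..N}" and below: "int k2 - 1 < int N - int k1"
  shows "psi k1 k2 = max (psi (k1 - 1) (k2 - 1)) (tc (int k2 - 1) (int N - int k1))"
proof -
  let ?F = "\<lambda>\<alpha>. tc \<alpha> (int N - 1 - int k1 + int k2 - \<alpha>)"
  let ?lo = "max (-1) (int k2 - int k1 - 1)"
  have "min (int k2 - 1) (int N - int k1 - 1) = (int k2 - 2) + 1"
    "min (int k2 - 2) (int N - int k1) = int k2 - 2"
    using below by auto
  have "psi k1 k2 = Max (?F ` {?lo..(int k2 - 2) + 1})"
    using Psi_eq_Max_antidiagonal[of k1 k2] k \<open>min (int k2 - 1) _ = _\<close> by simp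
  also have "\<dots> = max (?F (int k2 - 1)) (Max (?F ` {?lo..int k2 - 2}))"
    using k by (subst Max_image_atLeastAtMost_int_succ) auto
  also have "Max (?F ` {?lo..int k2 - 2}) = psi (k1 - 1) (k2 - 1)"
    using Psi_pred_eq_Max_antidiagonal[OF k] \<open>min (int k2 - 2) _ = _\<close> by simp
  finally show ?thesis
    by (simp add: max.commute)
qed

lemma Psi_step_above:
  assumes k: "k1 \<in> {1..N}" "k2 \<in> {1..N}" and above: "int k2 - 1 > int N - int k1"
  shows "psi (k1 - 1) (k2 - 1) = max (psi k1 k2) (tc (int N - int k1) (int k2 - 1))"
proof -
  let ?F = "\<lambda>\<alpha>. tc \<alpha> (int N - 1 - int k1 + int k2 - \<alpha>)"
  let ?lo = "max (-1) (int k2 - int k1 - 1)"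
  have "min (int k2 - 1) (int N - int k1 - 1) = int N - int k1 - 1"
    "min (int k2 - 2) (int N - int k1) = (int N - int k1 - 1) + 1"
    using above by auto
  have "psi (k1 - 1) (k2 - 1) = Max (?F ` {?lo..(int N - int k1 - 1) + 1})"
    using Psi_pred_eq_Max_antidiagonal[OF k] \<open>min (int k2 - 2) _ = _\<close> by simp
  also have "\<dots> = max (?F (int N - int k1)) (Max (?F ` {?lo..int N - int k1 - 1}))"
    using k by (subst Max_image_atLeastAtMost_int_succ) auto
  also have "Max (?F ` {?lo..int N - int k1 - 1}) = psi k1 k2"
    using Psi_eq_Max_antidiagonal[of k1 k2] k \<open>min (int k2 - 1) _ = _\<close> by simp
  finally show ?thesis
    by (simp add: max.commute)
qed

lemma Psi_step_diagonal:
  assumes "k1 \<in> {1..N}" "k2 \<in> {1..N}" "int k2 - 1 = int N - int k1"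
  shows "psi k1 k2 = psi (k1 - 1) (k2 - 1)"
proof -
  have "k1 \<le> N" "k2 \<le> N"
    using assms(1,2) by auto
  moreover have "min (int k2 - 1) (int N - int k1 - 1) = min (int k2 - 2) (int N - int k1)"
    using assms(3) by (simp add: min_def)
  ultimately show ?thesis
    using Psi_eq_Max_antidiagonal Psi_pred_eq_Max_antidiagonal[OF assms(1,2)] by metis
qed

lemma tau_l_plus_1_m_minus_1:
  assumes "\<delta> \<ge> 0" "\<epsilon> \<ge> 0"
  shows "tau N r c c' \<delta> \<epsilon> (l + 1) (m - 1) n
    = Max ((\<lambda>(k1, k2). psi k1 k2 - real k1 * \<delta> - real k2 * \<epsilon>) ` ({0..N} \<times> {0..N}))"
proof -
  let ?f = "\<lambda>(a, b). tc (int a - 1) (int N - int b) - real a * \<epsilon> - real b * \<delta>"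
  let ?g = "\<lambda>(k1, k2). psi k1 k2 - real k1 * \<delta> - real k2 * \<epsilon>"
  have "Max (?f ` {(a, b). a + b \<le> N}) = Max (?g ` ({0..N} \<times> {0..N}))"
  proof (rule Max_image_eq_if_dominated)
    have "{(a, b). a + b \<le> N} \<subseteq> {0..N} \<times> {0..N}"
      by auto
    then show "finite {(a, b). a + b \<le> N}"
      using finite_subset by blast
  next
    fix x assume "x \<in> {(a, b). a + b \<le> N}"
    then obtain a b where "x = (a, b)" "a + b \<le> N"
      by auto
    then show "\<exists>y\<in>{0..N} \<times> {0..N}. ?f x \<le> ?g y"
      using tauc_le_Psi by (intro bexI[of _ "(b, a)"]) auto
  next
    fix y assume "y \<in> {0..N} \<times> {0..N}"
    then obtain k1 k2 where k: "y = (k1, k2)" "k1 \<le> N" "k2 \<le> N"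
      by auto
    then obtain a b where ab: "a + b \<le> N" "a \<le> k2" "b \<le> k1"
      "psi k1 k2 = tc (int a - 1) (int N - int b)"
      using Psi_attained by metis
    have "real a * \<epsilon> \<le> real k2 * \<epsilon>" "real b * \<delta> \<le> real k1 * \<delta>"
      using ab(2,3) assms by (simp_all add: mult_right_mono)
    then show "\<exists>x\<in>{(a, b). a + b \<le> N}. ?g y \<le> ?f x"
      using ab(1,4) k(1) by (intro bexI[of _ "(a, b)"]) auto
  qed simp
  then show ?thesis
    using tau_l_plus_1_m_minus_1_eq_Max_tauc[OF assms] by simp
qed

end

theorem lemma9:
  fixes N :: nat and r c c' :: "nat \<Rightarrow> real" and \<delta> \<epsilon> :: real and l m n :: int
  assumes "N \<ge> 1" and "\<delta> > 0" and "\<epsilon> > 0"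
  shows
    "tau N r c c' \<delta> \<epsilon> (l + 1) m n =
       Max ((\<lambda>k1. tauc N r c c' \<delta> \<epsilon> l m n (-1) (int N - int k1) - real k1 * \<delta>) ` {0..N})
   \<and> tau N r c c' \<delta> \<epsilon> l (m - 1) n =
       Max ((\<lambda>k2. tauc N r c c' \<delta> \<epsilon> l m n (int k2 - 1) (int N) - real k2 * \<epsilon>) ` {0..N})
   \<and> tau N r c c' \<delta> \<epsilon> (l + 1) m (n - 1) =
       Max ((\<lambda>k1. tauc N r c c' \<delta> \<epsilon> l m n (int N - int k1 - 1) (int N) - real k1 * \<delta>) ` {0..N})
   \<and> tau N r c c' \<delta> \<epsilon> l (m - 1) (n + 1) =
       Max ((\<lambda>k2. tauc N r c c' \<delta> \<epsilon> l m n (-1) (int k2) - real k2 * \<epsilon>) ` {0..N})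
   \<and> tau N r c c' \<delta> \<epsilon> l m n = tauc N r c c' \<delta> \<epsilon> l m n (-1) (int N)
   \<and> tau N r c c' \<delta> \<epsilon> (l + 1) (m - 1) n =
       Max ((\<lambda>(k1, k2). Psi N r c c' \<delta> \<epsilon> l m n k1 k2 - real k1 * \<delta> - real k2 * \<epsilon>)
              ` ({0..N} \<times> {0..N}))
   \<and> (\<forall>k1 \<in> {1..N}. \<forall>k2 \<in> {1..N}.
        (int k2 - 1 < int N - int k1 \<longrightarrow>
           Psi N r c c' \<delta> \<epsilon> l m n k1 k2 =
             max (Psi N r c c' \<delta> \<epsilon> l m n (k1 - 1) (k2 - 1))
                 (tauc N r c c' \<delta> \<epsilon> l m n (int k2 - 1) (int N - int k1)))
      \<and> (int k2 - 1 > int N - int k1 \<longrightarrow>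
           Psi N r c c' \<delta> \<epsilon> l m n (k1 - 1) (k2 - 1) =
             max (Psi N r c c' \<delta> \<epsilon> l m n k1 k2)
                 (tauc N r c c' \<delta> \<epsilon> l m n (int N - int k1) (int k2 - 1)))
      \<and> (int k2 - 1 = int N - int k1 \<longrightarrow>
           Psi N r c c' \<delta> \<epsilon> l m n k1 k2 = Psi N r c c' \<delta> \<epsilon> l m n (k1 - 1) (k2 - 1)))"
proof -
  have "\<delta> \<ge> 0" "\<epsilon> \<ge> 0"
    using assms(2,3) by auto
  then show ?thesis
    by (intro conjI ballI impI tau_l_plus_1 tau_m_minus_1 tau_l_plus_1_n_minus_1 tau_m_minus_1_n_plus_1
        tau_eq_tauc tau_l_plus_1_m_minus_1 Psi_step_below Psi_step_above Psi_step_diagonal)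
qed

end
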